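(* There is no binary self-orthogonal $[54,6,26]$ code.
   Context: A binary linear code $C$ is self-orthogonal if $C\subseteq C^\perp$. *)

theory Defs
  imports "HOL-Analysis.Analysis" "HOL-Library.Z2" "HOL-Library.Numeral_Type"
begin

text \<open>Binary vectors of length n are elements of bit ^ 'n (with CARD('n) = n);
  bit is the two-element field GF(2). A binary linear code is a linear subspace.\<close>

definition binary_linear_code :: "(bit ^ 'n) set \<Rightarrow> bool" where
  "binary_linear_code C \<longleftrightarrow> vec.subspace C"

definition code_length :: "(bit ^ 'n) set \<Rightarrow> nat" where
  "code_length C = CARD('n)"

definition code_dimension :: "(bit ^ 'n) set \<Rightarrow> nat" where
  "code_dimension C = vec.dim C"

definition hamming_dist :: "bit ^ 'n \<Rightarrow> bit ^ 'n \<Rightarrow> nat" where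
  "hamming_dist x y = card {i. x $ i \<noteq> y $ i}"

definition min_distance :: "(bit ^ 'n) set \<Rightarrow> nat" where
  "min_distance C = Min {hamming_dist x y | x y. x \<in> C \<and> y \<in> C \<and> x \<noteq> y}"

definition dot :: "bit ^ 'n \<Rightarrow> bit ^ 'n \<Rightarrow> bit" where
  "dot x y = (\<Sum>i\<in>UNIV. x $ i * y $ i)"

definition dual_code :: "(bit ^ 'n) set \<Rightarrow> (bit ^ 'n) set" where
  "dual_code C = {y. \<forall>x\<in>C. dot x y = 0}"

definition self_orthogonal :: "(bit ^ 'n) set \<Rightarrow> bool" where
  "self_orthogonal C \<longleftrightarrow> C \<subseteq> dual_code C"

end

theory Submission
  imports Defs
begin

text \<open>In a self-orthogonal binary code every weight is even, and since
  wt(x + y) = wt x + wt y - 2 |supp x \<inter> supp y| with an even overlap, weights add modulo 4.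
  Hence the doubly-even codewords form a subcode D of index at most 2, so a [54,6,26] code
  would give |D| \<ge> 32. But every nonzero word of D has weight at least 28, and the
  Plotkin averaging argument (each coordinate is 1 in at most half of the words of D) gives
  28 (|D| - 1) \<le> 27 |D|, i.e. |D| \<le> 28.\<close>

lemma UNIV_bit: "UNIV = {0, 1 :: bit}"
  by (auto intro: bit.exhaust)

instance bit :: finite
  by standard (simp only: UNIV_bit finite.emptyI finite_insert)

lemma card_UNIV_bit: "CARD(bit) = 2"
  unfolding UNIV_bit by simp

lemma card_span_independent:
  fixes B :: "('a::{field,finite} ^ 'n) set"
  assumes indep: "vec.independent B"
  shows "card (vec.span B) = CARD('a) ^ card B"
proof -
  have fin: "finite B"
    using indep vec.independent_explicit by blast
  define comb where "comb u = (\<Sum>v\<in>B. u v *s v)" for u :: "'a ^ 'n \<Rightarrow> 'a"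
  have "vec.span B = range comb"
    using vec.span_finite[OF fin] by (simp add: comb_def)
  also have "\<dots> = comb ` (B \<rightarrow>\<^sub>E UNIV)"
  proof (intro equalityI subsetI)
    fix w assume "w \<in> range comb"
    then obtain u where "w = comb u" by blast
    moreover have "comb u = comb (restrict u B)"
      unfolding comb_def by (rule sum.cong) auto
    ultimately show "w \<in> comb ` (B \<rightarrow>\<^sub>E UNIV)" by auto
  qed auto
  finally have span_eq: "vec.span B = comb ` (B \<rightarrow>\<^sub>E UNIV)" .
  have "inj_on comb (B \<rightarrow>\<^sub>E UNIV)"
  proof (rule inj_onI)
    fix u u' assume u: "u \<in> B \<rightarrow>\<^sub>E UNIV" and u': "u' \<in> B \<rightarrow>\<^sub>E UNIV" and eq: "comb u = comb u'"
    have "(\<Sum>v\<in>B. (u v - u' v) *s v) = comb u - comb u'"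
      unfolding comb_def by (simp add: vec.scale_left_diff_distrib sum_subtractf)
    then have zero: "(\<Sum>v\<in>B. (u v - u' v) *s v) = 0"
      using eq by simp
    have "u v - u' v = 0" if "v \<in> B" for v
      by (rule vec.independentD[OF indep fin subset_refl zero that])
    then show "u = u'"
      using u u' by (auto intro: PiE_ext)
  qed
  then have "card (vec.span B) = card (B \<rightarrow>\<^sub>E (UNIV :: 'a set))"
    by (simp add: span_eq card_image)
  also have "\<dots> = CARD('a) ^ card B"
    by (simp add: card_PiE fin)
  finally show ?thesis .
qed

lemma card_subspace:
  fixes C :: "('a::{field,finite} ^ 'n) set"
  assumes "vec.subspace C"
  shows "card C = CARD('a) ^ vec.dim C"
proof -
  obtain B where "B \<subseteq> C" "vec.independent B" "C \<subseteq> vec.span B" "card B = vec.dim C"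
    using vec.basis_exists by blast
  moreover have "vec.span B = C"
    using assms \<open>B \<subseteq> C\<close> \<open>C \<subseteq> vec.span B\<close> vec.span_subspace by blast
  ultimately show ?thesis
    using card_span_independent by metis
qed

definition hamming_weight :: "bit ^ 'n \<Rightarrow> nat" where
  "hamming_weight x = card {i. x $ i = 1}"

lemma hamming_dist_zero_right: "hamming_dist x 0 = hamming_weight x"
  by (simp add: hamming_dist_def hamming_weight_def)

lemma card_eq_sum_indicator: "card {i. P i} = (\<Sum>i\<in>UNIV. if P i then 1 else 0)"
  for P :: "'n::finite \<Rightarrow> bool"
  by (simp add: sum.If_cases)

lemma dot_eq_of_nat_card: "dot x y = of_nat (card {i. x $ i = 1 \<and> y $ i = 1})"
proof -
  have "x $ i * y $ i = (if x $ i = 1 \<and> y $ i = 1 then 1 else 0)" for i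
    by (cases "x $ i"; cases "y $ i") auto
  then show ?thesis
    unfolding dot_def by (simp add: sum.If_cases)
qed

lemma of_nat_bit_eq_0_iff: "(of_nat n :: bit) = 0 \<longleftrightarrow> even n"
  by (induction n) auto

lemma hamming_weight_add:
  "hamming_weight (x + y) + 2 * card {i. x $ i = 1 \<and> y $ i = 1} = hamming_weight x + hamming_weight y"
proof -
  have pointwise: "(if (x + y) $ i = 1 then 1 else 0) + 2 * (if x $ i = 1 \<and> y $ i = 1 then 1 else 0)
      = (if x $ i = 1 then 1 else 0) + (if y $ i = 1 then 1 else (0::nat))" for i
    by (cases "x $ i"; cases "y $ i") auto
  have "hamming_weight (x + y) + 2 * card {i. x $ i = 1 \<and> y $ i = 1}
      = (\<Sum>i\<in>UNIV. (if (x + y) $ i = 1 then 1 else 0) + 2 * (if x $ i = 1 \<and> y $ i = 1 then 1 else 0))"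
    unfolding hamming_weight_def card_eq_sum_indicator by (simp only: sum.distrib sum_distrib_left)
  also have "\<dots> = (\<Sum>i\<in>UNIV. (if x $ i = 1 then 1 else 0) + (if y $ i = 1 then 1 else 0))"
    by (simp only: pointwise)
  also have "\<dots> = hamming_weight x + hamming_weight y"
    unfolding hamming_weight_def card_eq_sum_indicator by (simp only: sum.distrib)
  finally show ?thesis .
qed

lemma even_hamming_weight_if_dot_self: "dot x x = 0 \<Longrightarrow> even (hamming_weight x)"
  by (simp add: dot_eq_of_nat_card of_nat_bit_eq_0_iff hamming_weight_def)

lemma hamming_weight_add_mod_4:
  assumes "dot x y = 0"
  shows "hamming_weight (x + y) mod 4 = (hamming_weight x + hamming_weight y) mod 4"
proof -
  obtain k where "card {i. x $ i = 1 \<and> y $ i = 1} = 2 * k"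
    using assms by (auto simp: dot_eq_of_nat_card of_nat_bit_eq_0_iff)
  then have "hamming_weight (x + y) + 4 * k = hamming_weight x + hamming_weight y"
    using hamming_weight_add[of x y] by simp
  then show ?thesis
    by (metis mod_mult_self2)
qed

lemma self_orthogonalD: "self_orthogonal C \<Longrightarrow> x \<in> C \<Longrightarrow> y \<in> C \<Longrightarrow> dot x y = 0"
  unfolding self_orthogonal_def dual_code_def by blast

lemma min_distance_le_hamming_weight:
  assumes "vec.subspace C" "x \<in> C" "x \<noteq> 0"
  shows "min_distance C \<le> hamming_weight x"
proof -
  let ?dists = "{hamming_dist x y | x y. x \<in> C \<and> y \<in> C \<and> x \<noteq> y}"
  have "finite ?dists"
    by (rule finite_subset[of _ "case_prod hamming_dist ` UNIV"]) auto
  moreover have "hamming_dist x 0 \<in> ?dists"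
    using assms vec.subspace_0 by blast
  ultimately show ?thesis
    unfolding min_distance_def hamming_dist_zero_right[symmetric] by (rule Min_le)
qed

definition doubly_even_subcode :: "(bit ^ 'n) set \<Rightarrow> (bit ^ 'n) set" where
  "doubly_even_subcode C = {x \<in> C. 4 dvd hamming_weight x}"

lemma doubly_even_subcode_add:
  assumes "vec.subspace C" "self_orthogonal C"
    and "x \<in> doubly_even_subcode C" "y \<in> doubly_even_subcode C"
  shows "x + y \<in> doubly_even_subcode C"
  using assms hamming_weight_add_mod_4[OF self_orthogonalD[OF assms(2)], of x y]
  by (auto simp: doubly_even_subcode_def vec.subspace_add mod_eq_0_iff_dvd[symmetric] mod_add_eq[symmetric])

lemma card_le_twice_card_doubly_even_subcode:
  assumes sub: "vec.subspace C" and orth: "self_orthogonal C"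
  shows "card C \<le> 2 * card (doubly_even_subcode C)"
proof (cases "C \<subseteq> doubly_even_subcode C")
  case True
  then show ?thesis
    using card_mono[OF finite True] by linarith
next
  case False
  let ?D = "doubly_even_subcode C"
  obtain a where a: "a \<in> C" "a \<notin> ?D"
    using False by blast
  have "(\<lambda>x. x + a) ` (C - ?D) \<subseteq> ?D"
  proof clarify
    fix x assume x: "x \<in> C" "x \<notin> ?D"
    have "even (hamming_weight x)" "even (hamming_weight a)"
      using x(1) a(1) by (simp_all add: even_hamming_weight_if_dot_self self_orthogonalD[OF orth])
    moreover have "\<not> 4 dvd hamming_weight x" "\<not> 4 dvd hamming_weight a"
      using x a by (simp_all add: doubly_even_subcode_def)
    ultimately have "hamming_weight x mod 4 = 2" "hamming_weight a mod 4 = 2"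
      by presburger+
    then have "hamming_weight (x + a) mod 4 = 0"
      using hamming_weight_add_mod_4[OF self_orthogonalD[OF orth x(1) a(1)]] by (simp add: mod_add_eq[symmetric])
    then show "x + a \<in> ?D"
      using sub x(1) a(1) by (auto simp: doubly_even_subcode_def vec.subspace_add)
  qed
  then have "card (C - ?D) \<le> card ?D"
    by (rule card_inj_on_le[OF inj_on_add']) simp
  moreover have "card C = card ?D + card (C - ?D)"
  proof -
    have "?D \<subseteq> C"
      by (auto simp: doubly_even_subcode_def)
    then show ?thesis
      by (simp add: card_Diff_subset card_mono)
  qed
  ultimately show ?thesis
    by simp
qed

lemma card_coordinate_one_le_half:
  fixes D :: "(bit ^ 'n) set"
  assumes add: "\<And>x y. x \<in> D \<Longrightarrow> y \<in> D \<Longrightarrow> x + y \<in> D"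
  shows "2 * card {x \<in> D. x $ i = 1} \<le> card D"
proof (cases "\<exists>a\<in>D. a $ i = 1")
  case True
  then obtain a where a: "a \<in> D" "a $ i = 1"
    by blast
  have "(\<lambda>x. x + a) ` {x \<in> D. x $ i = 1} \<subseteq> {x \<in> D. x $ i \<noteq> 1}"
    using a add by auto
  then have "card {x \<in> D. x $ i = 1} \<le> card {x \<in> D. x $ i \<noteq> 1}"
    by (rule card_inj_on_le[OF inj_on_add']) simp
  moreover have "card {x \<in> D. x $ i = 1} + card {x \<in> D. x $ i \<noteq> 1} = card D"
    by (subst card_Un_disjoint[symmetric]) (auto intro: arg_cong[where f = card])
  ultimately show ?thesis
    by linarith
next
  case False
  then have "{x \<in> D. x $ i = 1} = {}"
    by blast
  then show ?thesis
    by (simp only: card.empty mult_0_right le0)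
qed

lemma sum_hamming_weight_le:
  fixes D :: "(bit ^ 'n) set"
  assumes add: "\<And>x y. x \<in> D \<Longrightarrow> y \<in> D \<Longrightarrow> x + y \<in> D"
  shows "2 * (\<Sum>x\<in>D. hamming_weight x) \<le> CARD('n) * card D"
proof -
  have "(\<Sum>x\<in>D. hamming_weight x) = (\<Sum>x\<in>D. \<Sum>i\<in>UNIV. if x $ i = 1 then 1 else 0)"
    unfolding hamming_weight_def card_eq_sum_indicator ..
  also have "\<dots> = (\<Sum>i\<in>UNIV. card {x \<in> D. x $ i = 1})"
    by (subst sum.swap) (simp add: sum.If_cases Int_def conj_commute)
  finally have "2 * (\<Sum>x\<in>D. hamming_weight x) = (\<Sum>i\<in>UNIV. 2 * card {x \<in> D. x $ i = 1})"
    by (simp add: sum_distrib_left)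
  also have "\<dots> \<le> (\<Sum>i\<in>(UNIV :: 'n set). card D)"
    by (rule sum_mono) (rule card_coordinate_one_le_half[OF add])
  finally show ?thesis
    by simp
qed

lemma plotkin_bound:
  fixes D :: "(bit ^ 'n) set"
  assumes add: "\<And>x y. x \<in> D \<Longrightarrow> y \<in> D \<Longrightarrow> x + y \<in> D"
    and min_weight: "\<And>x. x \<in> D \<Longrightarrow> x \<noteq> 0 \<Longrightarrow> d \<le> hamming_weight x"
  shows "2 * d * (card D - 1) \<le> CARD('n) * card D"
proof -
  have "d * (card D - 1) \<le> d * card (D - {0})"
    using diff_card_le_card_Diff[of "{0}" D] by simp
  also have "\<dots> = (\<Sum>x\<in>D - {0}. d)"
    by simp
  also have "\<dots> \<le> (\<Sum>x\<in>D - {0}. hamming_weight x)"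
    by (rule sum_mono) (simp add: min_weight)
  also have "\<dots> \<le> (\<Sum>x\<in>D. hamming_weight x)"
    by (rule sum_mono2) auto
  finally show ?thesis
    using sum_hamming_weight_le[OF add] by linarith
qed

theorem corollary6p6:
  shows "\<not> (\<exists>C :: (bit ^ 54) set. binary_linear_code C \<and> code_length C = 54 \<and>
            code_dimension C = 6 \<and> min_distance C = 26 \<and> self_orthogonal C)"
proof
  assume "\<exists>C :: (bit ^ 54) set. binary_linear_code C \<and> code_length C = 54 \<and>
            code_dimension C = 6 \<and> min_distance C = 26 \<and> self_orthogonal C"
  then obtain C :: "(bit ^ 54) set" where sub: "vec.subspace C" and dim: "vec.dim C = 6"
    and dist: "min_distance C = 26" and orth: "self_orthogonal C"
    unfolding binary_linear_code_def code_dimension_def by blast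
  define D where "D = doubly_even_subcode C"
  have "64 \<le> 2 * card D"
    using card_subspace[OF sub] card_le_twice_card_doubly_even_subcode[OF sub orth]
    by (simp add: dim card_UNIV_bit D_def)
  moreover have "28 \<le> hamming_weight x" if "x \<in> D" "x \<noteq> 0" for x
  proof -
    have "26 \<le> hamming_weight x" "4 dvd hamming_weight x"
      using min_distance_le_hamming_weight[OF sub] dist that by (auto simp: D_def doubly_even_subcode_def)
    then show ?thesis
      by presburger
  qed
  then have "2 * 28 * (card D - 1) \<le> 54 * card D"
    using plotkin_bound[of D 28] doubly_even_subcode_add[OF sub orth] by (simp add: D_def)
  ultimately show False
    by linarith
qed

end
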